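(* In the setting described in the context, fix a round $t\ge1$ and let $m_t=\arg\max_i\tilde Y_i(t)$. For any given $\gamma\in[1/(N+1),1/N)$, set $v=(2\log(N/(1-\gamma N)))^{-1/2}$. Then $\mathbb{P}(m_t\in N_t\mid\mathcal{H}_t)\ge1-\gamma$.
   Context: Linear contextual bandit with $N$ arms: at round $t$, contexts $X_i(t)\in\mathbb{R}^d$, $i=1,\ldots,N$, are observed and the expected reward of arm $i$ is $X_i(t)^T\beta$ for an unknown $\beta\in\mathbb{R}^d$. $\mathcal{H}_t$ denotes the observed history (past contexts, actions, observed rewards) together with the current contexts $\{X_i(t)\}_{i=1}^N$. Let $a^*_t=\arg\max_iX_i(t)^T\beta$ and $\Delta_i(t)=X_{a^*_t}(t)^T\beta-X_i(t)^T\beta$. Let $\widehat\beta_{t-1}\in\mathbb{R}^d$ be the (doubly robust ridge) estimator computed from $\mathcal{H}_t$, and $V_{t-1}=\sum_{\tau=1}^{t-1}\sum_{i=1}^N X_i(\tau)X_i(\tau)^T+\lambda_{t-1}I$ with $\lambda_{t-1}>0$ (with $\widehat\beta_0=0$, $V_0=\lambda I$, $\lambda>0$). For $x\in\mathbb{R}^d$ and positive definite $A$, $\|x\|_A=\sqrt{x^TAx}$. Given $\mathcal{H}_t$, draw $\tilde\beta_1(t),\ldots,\tilde\beta_N(t)$ independently from $N(\widehat\beta_{t-1},v^2V_{t-1}^{-1})$ and let $\tilde Y_i(t)=X_i(t)^T\tilde\beta_i(t)$. The set of super-unsaturated arms is $$N_t=\Big\{i:\ \Delta_i(t)\le2\|\widehat\beta_{t-1}-\beta\|_2+\sqrt{\|X_{a^*_t}(t)\|^2_{V_{t-1}^{-1}}+\|X_i(t)\|^2_{V_{t-1}^{-1}}}\Big\}.$$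 *)

theory Defs
  imports "HOL-Probability.Probability"
begin

definition outer :: "real ^ 'd \<Rightarrow> real ^ 'd ^ 'd" where
  "outer x = (\<chi> i j. x $ i * x $ j)"

definition wnorm2 :: "real ^ 'd ^ 'd \<Rightarrow> real ^ 'd \<Rightarrow> real" where
  "wnorm2 A x = x \<bullet> (A *v x)"

definition mvn_density :: "real ^ 'd \<Rightarrow> real ^ 'd ^ 'd \<Rightarrow> real ^ 'd \<Rightarrow> real" where
  "mvn_density mu S x =
     exp (- (x - mu) \<bullet> (matrix_inv S *v (x - mu)) / 2)
       / sqrt ((2 * pi) ^ CARD('d) * det S)"

definition mvn :: "real ^ 'd \<Rightarrow> real ^ 'd ^ 'd \<Rightarrow> (real ^ 'd) measure" where
  "mvn mu S = density lborel (\<lambda>x. ennreal (mvn_density mu S x))"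

definition argmax_arm :: "nat \<Rightarrow> (nat \<Rightarrow> real) \<Rightarrow> nat" where
  "argmax_arm N f = (LEAST i. i < N \<and> (\<forall>j<N. f j \<le> f i))"

end

theory Submission
  imports Defs
begin

text \<open>The optimal arm a always belongs to N_t. If the Thompson sample m_t does not, then some
  arm j outside N_t received a sample with X_j^T beta_j \<ge> X_a^T beta_a. For such j the gap
  Delta_j exceeds 2 |betahat - beta| + s, s = sqrt (|X_a|^2 + |X_j|^2) in the V^-1 norm, so by
  Cauchy-Schwarz betahat still prefers a by more than s, while X_j^T beta_j - X_a^T beta_a is
  Gaussian with variance v^2 s^2. A Chernoff bound gives probability at most
  exp (-1 / (2 v^2)) = (1 - gamma N) / N per arm, and a union bound over the at most N - 1
  such arms gives at most gamma because gamma \<ge> 1 / (N + 1).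

  The normalisation and the moment generating function of the multivariate normal density rest
  on the Gaussian integral of exp (- x^T A x / 2) for positive definite A, computed by symmetric
  Gaussian elimination: every elimination step is a shear, which preserves both Lebesgue
  measure and the determinant.\<close>

section \<open>Positive definite matrices\<close>

definition pos_def :: "real^'d^'d \<Rightarrow> bool" where
  "pos_def A \<longleftrightarrow> transpose A = A \<and> (\<forall>x. x \<noteq> 0 \<longrightarrow> wnorm2 A x > 0)"

lemma wnorm2_eq_sum: "wnorm2 A x = (\<Sum>i\<in>UNIV. \<Sum>j\<in>UNIV. x$i * A$i$j * x$j)"
  unfolding wnorm2_def inner_vec_def matrix_vector_mult_def
  by (simp add: sum_distrib_left mult.assoc)

lemma wnorm2_zero [simp]: "wnorm2 A 0 = 0"
  by (simp add: wnorm2_def)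

lemma wnorm2_scaleR: "wnorm2 A (c *\<^sub>R x) = c\<^sup>2 * wnorm2 A x"
  by (simp add: wnorm2_def matrix_vector_mult_scaleR power2_eq_square)

lemma wnorm2_uminus [simp]: "wnorm2 A (- x) = wnorm2 A x"
  by (simp add: wnorm2_eq_sum)

lemma wnorm2_add:
  "wnorm2 A (x + y) = wnorm2 A x + x \<bullet> (A *v y) + y \<bullet> (A *v x) + wnorm2 A y"
  by (simp add: wnorm2_def matrix_vector_right_distrib inner_add_left inner_add_right)

lemma wnorm2_add_matrix: "wnorm2 (A + B) x = wnorm2 A x + wnorm2 B x"
  by (simp add: wnorm2_def matrix_vector_mult_add_rdistrib inner_add_right)

lemma wnorm2_sum_matrix: "wnorm2 (\<Sum>i\<in>I. A i) x = (\<Sum>i\<in>I. wnorm2 (A i) x)"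
  by (induction I rule: infinite_finite_induct) (simp_all add: wnorm2_add_matrix, simp_all add: wnorm2_def)

lemma wnorm2_scaleR_matrix: "wnorm2 (c *\<^sub>R A) x = c * wnorm2 A x"
  by (simp add: wnorm2_def scaleR_matrix_vector_assoc[symmetric])

lemma wnorm2_mat_1: "wnorm2 (mat 1) x = x \<bullet> x"
  by (simp add: wnorm2_def)

lemma wnorm2_outer: "wnorm2 (outer y) x = (y \<bullet> x)\<^sup>2"
  unfolding wnorm2_eq_sum outer_def power2_eq_square inner_vec_def sum_product
  by (intro sum.cong refl) (simp add: algebra_simps)

lemma inner_axis_matrix_vector: "axis j 1 \<bullet> (A *v axis k 1) = (A::real^'d^'d)$j$k"
  by (simp only: inner_axis' matrix_vector_mul_component inner_axis) simp

lemma inner_transpose_matrix_vector: "x \<bullet> (transpose A *v y) = (A *v x) \<bullet> y"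
  for A :: "real^'n^'m"
  by (metis dot_lmul_matrix inner_commute transpose_matrix_vector)

lemma wnorm2_congruence: "wnorm2 (transpose E ** A ** E) x = wnorm2 A (E *v x)"
  unfolding wnorm2_def matrix_vector_mul_assoc[symmetric] inner_transpose_matrix_vector ..

lemma borel_measurable_wnorm2 [measurable]: "wnorm2 A \<in> borel_measurable borel"
  unfolding wnorm2_def
  by (intro borel_measurable_continuous_onI continuous_intros linear_continuous_on
      matrix_vector_mul_linear bounded_linear_inner_right_comp)
     (simp add: linear_conv_bounded_linear[symmetric])

lemma symmetric_matrix_eqI:
  fixes A B :: "real^'d^'d"
  assumes "transpose A = A" "transpose B = B" "\<And>x. wnorm2 A x = wnorm2 B x"
  shows "A = B"
proof -
  have "A$j$k = B$j$k" for j k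
  proof -
    have "A$j$k = A$k$j" "B$j$k = B$k$j"
      using assms(1,2) by (metis transpose_def vec_lambda_beta)+
    with assms(3)[of "axis j 1 + axis k 1"] assms(3)[of "axis j 1"] assms(3)[of "axis k 1"]
    show ?thesis
      unfolding wnorm2_add unfolding wnorm2_def inner_axis_matrix_vector by simp
  qed
  then show ?thesis by (simp add: vec_eq_iff)
qed

lemma pos_def_symmetric: "pos_def A \<Longrightarrow> A$j$k = A$k$j"
  unfolding pos_def_def by (metis transpose_def vec_lambda_beta)

lemma pos_def_wnorm2_nonneg: "pos_def A \<Longrightarrow> 0 \<le> wnorm2 A x"
  unfolding pos_def_def by (cases "x = 0") (auto intro: less_imp_le)

lemma pos_def_wnorm2_eq_0_iff: "pos_def A \<Longrightarrow> wnorm2 A x = 0 \<longleftrightarrow> x = 0"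
  unfolding pos_def_def by (metis less_irrefl wnorm2_zero)

lemma pos_def_diagonal_pos: "pos_def A \<Longrightarrow> 0 < A$i$i"
  unfolding pos_def_def using inner_axis_matrix_vector[of i A i]
  by (metis axis_eq_0_iff wnorm2_def zero_neq_one)

lemma pos_def_scaleR: "pos_def A \<Longrightarrow> 0 < c \<Longrightarrow> pos_def (c *\<^sub>R A)"
  unfolding pos_def_def by (simp add: transpose_scalar wnorm2_scaleR_matrix)

lemma pos_def_sum_outer_plus_ridge:
  fixes x :: "'a \<Rightarrow> 'b \<Rightarrow> real^'d"
  assumes "0 < lam"
  shows "pos_def ((\<Sum>s\<in>T. \<Sum>i\<in>K. outer (x s i)) + lam *\<^sub>R mat 1)"
  unfolding pos_def_def
proof (intro conjI allI impI)
  have "transpose (outer y) = outer y" for y :: "real^'d"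
    by (simp add: transpose_def outer_def vec_eq_iff mult.commute)
  moreover have "transpose (\<Sum>i\<in>I. A i) = (\<Sum>i\<in>I. transpose (A i))" for I and A :: "_ \<Rightarrow> real^'d^'d"
    by (induction I rule: infinite_finite_induct) (auto simp: transpose_def vec_eq_iff)
  ultimately show "transpose ((\<Sum>s\<in>T. \<Sum>i\<in>K. outer (x s i)) + lam *\<^sub>R mat 1)
      = (\<Sum>s\<in>T. \<Sum>i\<in>K. outer (x s i)) + lam *\<^sub>R mat 1"
    by (simp add: transpose_def vec_eq_iff mat_def)
next
  fix y :: "real^'d" assume "y \<noteq> 0"
  then show "0 < wnorm2 ((\<Sum>s\<in>T. \<Sum>i\<in>K. outer (x s i)) + lam *\<^sub>R mat 1) y"
    using assms by (simp add: wnorm2_add_matrix wnorm2_sum_matrix wnorm2_outer wnorm2_scaleR_matrix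
        wnorm2_mat_1 add_nonneg_pos sum_nonneg)
qed

lemma pos_def_matrix_inv:
  fixes A :: "real^'d^'d"
  assumes A: "pos_def A"
  shows "A ** matrix_inv A = mat 1" "matrix_inv A ** A = mat 1" "pos_def (matrix_inv A)"
proof -
  have "x = 0" if "A *v x = 0" for x
    using that pos_def_wnorm2_eq_0_iff[OF A, of x] by (simp add: wnorm2_def)
  then obtain B where "B ** A = mat 1"
    using matrix_left_invertible_ker by blast
  then have "\<exists>B. A ** B = mat 1 \<and> B ** A = mat 1"
    using matrix_left_right_inverse by blast
  from someI_ex[OF this] show AB: "A ** matrix_inv A = mat 1" and BA: "matrix_inv A ** A = mat 1"
    unfolding matrix_inv_def by blast+
  define B where "B = matrix_inv A"
  have "transpose B ** A = mat 1"
    using arg_cong[OF AB, of transpose] A by (simp add: matrix_transpose_mul pos_def_def B_def)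
  then have "transpose B = B"
    by (metis AB B_def matrix_mul_assoc matrix_mul_lid matrix_mul_rid)
  moreover have "0 < wnorm2 B x" if "x \<noteq> 0" for x
  proof -
    have x: "x = A *v (B *v x)"
      by (simp add: matrix_vector_mul_assoc AB B_def)
    then have "B *v x \<noteq> 0"
      using that by auto
    then have "0 < wnorm2 A (B *v x)"
      using A unfolding pos_def_def by blast
    also have "wnorm2 A (B *v x) = wnorm2 B x"
      unfolding wnorm2_def by (subst (3) x) (rule inner_commute)
    finally show ?thesis .
  qed
  ultimately show "pos_def (matrix_inv A)"
    unfolding pos_def_def B_def by blast
qed

section \<open>Gaussian integrals\<close>

lemma nn_integral_lborel_shear:
  fixes f :: "'a::euclidean_space \<Rightarrow> ennreal" and c e :: 'a
  assumes f [measurable]: "f \<in> borel_measurable borel" and e: "e \<in> Basis" and ce: "c \<bullet> e = 0"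
  shows "(\<integral>\<^sup>+y. f (y + (c \<bullet> y) *\<^sub>R e) \<partial>lborel) = (\<integral>\<^sup>+y. f y \<partial>lborel)"
proof -
  interpret P: product_sigma_finite "\<lambda>_::'a. (lborel::real measure)"
    by standard
  define \<phi> :: "('a \<Rightarrow> real) \<Rightarrow> 'a" where "\<phi> g = (\<Sum>b\<in>Basis. g b *\<^sub>R b)" for g
  have [measurable]: "\<phi> \<in> borel_measurable (\<Pi>\<^sub>M b\<in>Basis. lborel)"
    unfolding \<phi>_def by measurable
  define I where "I = Basis - {e}"
  have I: "finite I" "e \<notin> I" "insert e I = Basis"
    using e by (auto simp: I_def)
  have \<phi>_upd: "\<phi> (g(e := z)) = (\<Sum>b\<in>I. g b *\<^sub>R b) + z *\<^sub>R e" for g z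
    unfolding \<phi>_def I(3)[symmetric] using I(1,2)
    by (simp add: sum.insert) (rule sum.cong, auto)
  define h where "h g = (\<Sum>b\<in>I. g b * (c \<bullet> b))" for g :: "'a \<Rightarrow> real"
  \<comment> \<open>On each line parallel to e the shear is a translation, by an amount independent of the line coordinate.\<close>
  have shear: "\<phi> (g(e := y)) + (c \<bullet> \<phi> (g(e := y))) *\<^sub>R e = \<phi> (g(e := y + h g))" for g y
  proof -
    have "c \<bullet> ((\<Sum>b\<in>I. g b *\<^sub>R b) + y *\<^sub>R e) = h g"
      by (simp add: inner_add_right inner_sum_right ce h_def mult.commute)
    with \<phi>_upd show ?thesis by (simp add: algebra_simps)
  qed
  have "(\<integral>\<^sup>+y. f (y + (c \<bullet> y) *\<^sub>R e) \<partial>lborel)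
      = (\<integral>\<^sup>+g. f (\<phi> g + (c \<bullet> \<phi> g) *\<^sub>R e) \<partial>(\<Pi>\<^sub>M b\<in>Basis. lborel))"
    by (subst lborel_eq) (simp add: nn_integral_distr \<phi>_def)
  also have "\<dots> = (\<integral>\<^sup>+g. (\<integral>\<^sup>+y. f (\<phi> (g(e := y)) + (c \<bullet> \<phi> (g(e := y))) *\<^sub>R e) \<partial>lborel) \<partial>(\<Pi>\<^sub>M b\<in>I. lborel))"
    unfolding I(3)[symmetric] by (rule P.product_nn_integral_insert[OF I(1,2)]) (simp add: I(3))
  also have "\<dots> = (\<integral>\<^sup>+g. (\<integral>\<^sup>+y. f (\<phi> (g(e := y))) \<partial>lborel) \<partial>(\<Pi>\<^sub>M b\<in>I. lborel))"
  proof (rule nn_integral_cong)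
    fix g
    have "(\<lambda>y. f (\<phi> (g(e := y)))) \<in> borel_measurable borel"
      unfolding \<phi>_upd by measurable
    from nn_integral_real_affine[OF this, of 1 "h g"]
    show "(\<integral>\<^sup>+y. f (\<phi> (g(e := y)) + (c \<bullet> \<phi> (g(e := y))) *\<^sub>R e) \<partial>lborel) = (\<integral>\<^sup>+y. f (\<phi> (g(e := y))) \<partial>lborel)"
      unfolding shear by (simp add: add.commute)
  qed
  also have "\<dots> = (\<integral>\<^sup>+g. f (\<phi> g) \<partial>(\<Pi>\<^sub>M b\<in>Basis. lborel))"
    unfolding I(3)[symmetric] by (rule P.product_nn_integral_insert[OF I(1,2), symmetric]) (simp add: I(3))
  also have "\<dots> = (\<integral>\<^sup>+y. f y \<partial>lborel)"
    by (subst (2) lborel_eq) (simp add: nn_integral_distr \<phi>_def)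
  finally show ?thesis .
qed

lemma nn_integral_lborel_translate:
  fixes f :: "'a::euclidean_space \<Rightarrow> ennreal"
  assumes [measurable]: "f \<in> borel_measurable borel"
  shows "(\<integral>\<^sup>+x. f (x - m) \<partial>lborel) = (\<integral>\<^sup>+x. f x \<partial>lborel)"
proof -
  have "(\<integral>\<^sup>+x. f x \<partial>lborel) = (\<integral>\<^sup>+x. f x \<partial>distr lborel borel ((+) (- m)))"
    by (simp add: lborel_distr_plus)
  also have "\<dots> = (\<integral>\<^sup>+x. f (- m + x) \<partial>lborel)"
    by (subst nn_integral_distr) auto
  finally show ?thesis by simp
qed

text \<open>One step of symmetric Gaussian elimination with pivot A$i$i. The pivot entry is kept on the
  diagonal, so that the result is again positive definite with the same determinant.\<close>

definition pivot_row :: "real^'d^'d \<Rightarrow> 'd \<Rightarrow> real^'d" where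
  "pivot_row A i = (\<chi> j. if j = i then 0 else A$i$j / A$i$i)"

definition schur_complement :: "real^'d^'d \<Rightarrow> 'd \<Rightarrow> real^'d^'d" where
  "schur_complement A i = (\<chi> j k. if j = i \<and> k = i then A$i$i else if j = i \<or> k = i then 0
                                  else A$j$k - A$i$j * A$i$k / A$i$i)"

lemma pivot_row_pivot [simp]: "pivot_row A i $ i = 0"
  by (simp add: pivot_row_def)

lemma sum_sum_split_diagonal:
  fixes f :: "'d::finite \<Rightarrow> 'd \<Rightarrow> real"
  shows "(\<Sum>j\<in>UNIV. \<Sum>k\<in>UNIV. f j k) = f i i + (\<Sum>k\<in>UNIV-{i}. f i k) + (\<Sum>j\<in>UNIV-{i}. f j i)
          + (\<Sum>j\<in>UNIV-{i}. \<Sum>k\<in>UNIV-{i}. f j k)"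
proof -
  have split: "(\<Sum>k\<in>UNIV. g k) = g i + (\<Sum>k\<in>UNIV-{i}. g k)" for g :: "'d \<Rightarrow> real"
    by (subst sum.remove[of _ i]) auto
  show ?thesis
    by (simp add: split sum.distrib ac_simps)
qed

lemma wnorm2_schur_complement:
  fixes A :: "real^'d^'d"
  assumes sym: "transpose A = A" and pivot: "A$i$i \<noteq> 0"
  shows "wnorm2 A y = wnorm2 (schur_complement A i) (y + (pivot_row A i \<bullet> y) *\<^sub>R axis i 1)"
proof -
  have A_sym: "A$j$k = A$k$j" for j k
    using sym by (metis transpose_def vec_lambda_beta)
  define R where "R = UNIV - {i}"
  define s where "s = (\<Sum>k\<in>R. A$i$k * y$k)"
  define z where "z = y + (pivot_row A i \<bullet> y) *\<^sub>R axis i 1"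
  have "pivot_row A i \<bullet> y = s / A$i$i"
    unfolding inner_vec_def s_def R_def pivot_row_def
    by (subst sum.remove[of _ i]) (auto simp: sum_divide_distrib)
  then have z_i: "z$i = y$i + s / A$i$i" and z_R: "j \<in> R \<Longrightarrow> z$j = y$j" for j
    by (simp_all add: z_def axis_def R_def)
  have lhs: "wnorm2 A y = A$i$i * (y$i)\<^sup>2 + 2 * y$i * s + (\<Sum>j\<in>R. \<Sum>k\<in>R. y$j * A$j$k * y$k)"
    unfolding wnorm2_eq_sum sum_sum_split_diagonal[of _ i] R_def[symmetric] s_def
    by (simp add: sum_distrib_left power2_eq_square A_sym algebra_simps)
  have "(\<Sum>j\<in>R. \<Sum>k\<in>R. z$j * schur_complement A i$j$k * z$k)
      = (\<Sum>j\<in>R. \<Sum>k\<in>R. y$j * A$j$k * y$k - (A$i$j * y$j) * (A$i$k * y$k) / A$i$i)"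
    by (intro sum.cong refl) (auto simp: z_R schur_complement_def R_def field_simps)
  also have "\<dots> = (\<Sum>j\<in>R. \<Sum>k\<in>R. y$j * A$j$k * y$k) - s * s / A$i$i"
    unfolding s_def sum_product sum_divide_distrib sum_subtractf ..
  finally have rest: "(\<Sum>j\<in>R. \<Sum>k\<in>R. z$j * schur_complement A i$j$k * z$k)
      = (\<Sum>j\<in>R. \<Sum>k\<in>R. y$j * A$j$k * y$k) - s * s / A$i$i" .
  have rhs: "wnorm2 (schur_complement A i) z
      = A$i$i * (z$i)\<^sup>2 + (\<Sum>j\<in>R. \<Sum>k\<in>R. z$j * schur_complement A i$j$k * z$k)"
    unfolding wnorm2_eq_sum sum_sum_split_diagonal[of _ i] R_def[symmetric]
    by (simp add: schur_complement_def R_def power2_eq_square)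
  show ?thesis
    unfolding z_def[symmetric] rhs rest lhs z_i using pivot by (simp add: field_simps power2_eq_square)
qed

lemma pos_def_schur_complement:
  fixes A :: "real^'d^'d"
  assumes A: "pos_def A"
  shows "pos_def (schur_complement A i)"
  unfolding pos_def_def
proof (intro conjI allI impI)
  show "transpose (schur_complement A i) = schur_complement A i"
    by (simp add: transpose_def schur_complement_def vec_eq_iff pos_def_symmetric[OF A] mult.commute)
  fix z :: "real^'d" assume "z \<noteq> 0"
  define y where "y = z - (pivot_row A i \<bullet> z) *\<^sub>R axis i 1"
  have "pivot_row A i \<bullet> y = pivot_row A i \<bullet> z"
    by (simp add: y_def inner_diff_right inner_axis)
  then have z: "z = y + (pivot_row A i \<bullet> y) *\<^sub>R axis i 1"
    by (simp add: y_def)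
  with \<open>z \<noteq> 0\<close> have "y \<noteq> 0"
    by auto
  then have "0 < wnorm2 A y"
    using A unfolding pos_def_def by blast
  then show "0 < wnorm2 (schur_complement A i) z"
    using A wnorm2_schur_complement[of A i y] pos_def_diagonal_pos[OF A, of i]
    unfolding pos_def_def z[symmetric] by simp
qed

lemma det_schur_complement:
  fixes A :: "real^'d^'d"
  assumes sym: "transpose A = A" and pivot: "A$i$i \<noteq> 0"
  shows "det (schur_complement A i) = det A"
proof -
  let ?A' = "schur_complement A i" and ?c = "pivot_row A i"
  have sym': "transpose ?A' = ?A'"
    using sym by (simp add: transpose_def schur_complement_def vec_eq_iff mult.commute)
  define E :: "real^'d^'d" where "E = (\<chi> j k. (if j = k then 1 else 0) + (if j = i then ?c$k else 0))"
  have E: "E *v y = y + (?c \<bullet> y) *\<^sub>R axis i 1" for y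
    by (simp add: E_def matrix_vector_mult_def vec_eq_iff axis_def inner_vec_def distrib_right
        sum.distrib if_distrib[of "\<lambda>x. x * _"] cong: if_cong)
  have "A = transpose E ** ?A' ** E"
    by (rule symmetric_matrix_eqI)
       (simp_all add: sym sym' matrix_transpose_mul matrix_mul_assoc wnorm2_congruence E
         wnorm2_schur_complement[OF sym pivot])
  moreover have "det E = 1"
  proof -
    have "?c = (\<Sum>j\<in>UNIV-{i}. ?c$j *s row j (mat 1 :: real^'d^'d))"
      by (simp add: vec_eq_iff row_def mat_def pivot_row_def sum.If_cases if_distrib cong: if_cong)
    also have "\<dots> \<in> vec.span {row j (mat 1 :: real^'d^'d) |j. j \<noteq> i}"
      by (intro vec.span_sum vec.span_scale vec.span_base) auto
    finally have "det (\<chi> k. if k = i then row i (mat 1 :: real^'d^'d) + ?c else row k (mat 1)) = 1"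
      using det_row_span by fastforce
    moreover have "(\<chi> k. if k = i then row i (mat 1 :: real^'d^'d) + ?c else row k (mat 1)) = E"
      by (simp add: vec_eq_iff row_def mat_def E_def)
    ultimately show ?thesis by simp
  qed
  ultimately show ?thesis
    by (metis det_mul det_transpose mult.commute mult_1)
qed

lemma nn_integral_gaussian_1d:
  fixes a :: real
  assumes "0 < a"
  shows "(\<integral>\<^sup>+t. ennreal (exp (- (a * t\<^sup>2) / 2)) \<partial>lborel) = ennreal (sqrt (2 * pi / a))"
proof -
  have "exp (- (a * t\<^sup>2) / 2) = sqrt (2 * pi / a) * normal_density 0 (1 / sqrt a) t" for t
    using assms by (simp add: normal_density_def power_divide real_sqrt_divide)
  then have "(\<integral>\<^sup>+t. ennreal (exp (- (a * t\<^sup>2) / 2)) \<partial>lborel)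
      = (\<integral>\<^sup>+t. ennreal (sqrt (2 * pi / a)) * ennreal (normal_density 0 (1 / sqrt a) t) \<partial>lborel)"
    using assms by (intro nn_integral_cong) (simp add: ennreal_mult)
  also have "\<dots> = ennreal (sqrt (2 * pi / a))"
    using assms by (simp add: nn_integral_cmult nn_integral_eq_integral)
  finally show ?thesis .
qed

lemma real_sqrt_prod: "sqrt (\<Prod>i\<in>I. f i) = (\<Prod>i\<in>I. sqrt (f i))"
  by (induction I rule: infinite_finite_induct) (auto simp: real_sqrt_mult)

lemma nn_integral_gaussian_diagonal:
  fixes A :: "real^'d^'d"
  assumes diag: "\<And>i j. i \<noteq> j \<Longrightarrow> A$i$j = 0" and pos: "\<And>i. 0 < A$i$i"
  shows "(\<integral>\<^sup>+x. ennreal (exp (- wnorm2 A x / 2)) \<partial>lborel) = ennreal (sqrt ((2 * pi)^CARD('d) / det A))"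
proof -
  have prod_Basis: "(\<Prod>b\<in>Basis. F b) = (\<Prod>i\<in>UNIV. F (axis i 1))" for F :: "real^'d \<Rightarrow> ennreal"
    by (simp add: Basis_vec_def prod.reindex inj_def axis_eq_axis UNION_singleton_eq_range
        flip: image_image)
  define f where "f b t = ennreal (exp (- ((b \<bullet> (A *v b)) * t\<^sup>2) / 2))" for b :: "real^'d" and t :: real
  have row: "(\<Sum>j\<in>UNIV. x$i * A$i$j * x$j) = A$i$i * (x$i)\<^sup>2" for x :: "real^'d" and i
    by (subst sum.remove[of _ i]) (auto simp: diag power2_eq_square)
  have "wnorm2 A x = (\<Sum>i\<in>UNIV. A$i$i * (x$i)\<^sup>2)" for x
    unfolding wnorm2_eq_sum row ..
  then have "ennreal (exp (- wnorm2 A x / 2)) = (\<Prod>b\<in>Basis. f b (x \<bullet> b))" for x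
    unfolding prod_Basis f_def inner_axis_matrix_vector
    by (simp add: inner_axis prod_ennreal exp_sum[symmetric] sum_negf sum_divide_distrib)
  then have "(\<integral>\<^sup>+x. ennreal (exp (- wnorm2 A x / 2)) \<partial>lborel) = (\<integral>\<^sup>+x. (\<Prod>b\<in>Basis. f b (x \<bullet> b)) \<partial>lborel)"
    by simp
  also have "\<dots> = (\<Prod>b\<in>Basis. (\<integral>\<^sup>+t. f b t \<partial>lborel))"
    by (rule nn_integral_lborel_prod) (auto simp: f_def)
  also have "\<dots> = (\<Prod>i\<in>UNIV. ennreal (sqrt (2 * pi / A$i$i)))"
    unfolding prod_Basis f_def inner_axis_matrix_vector using nn_integral_gaussian_1d[OF pos] by simp
  also have "\<dots> = ennreal (sqrt ((2 * pi)^CARD('d) / det A))"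
  proof -
    have "(2 * pi)^CARD('d) / det A = (\<Prod>i\<in>UNIV. 2 * pi / A$i$i)"
      by (simp add: det_diagonal[OF diag] prod_dividef)
    then show ?thesis
      using pos by (simp add: real_sqrt_prod prod_ennreal less_imp_le)
  qed
  finally show ?thesis .
qed

text \<open>Induction on the set of coordinates in which A may still have off-diagonal entries: each
  elimination step preserves the determinant and, by shear invariance of Lebesgue measure, the
  Gaussian integral.\<close>

lemma gaussian_integral_pos_def:
  fixes A :: "real^'d^'d"
  assumes "pos_def A"
  shows "0 < det A"
    and "(\<integral>\<^sup>+x. ennreal (exp (- wnorm2 A x / 2)) \<partial>lborel) = ennreal (sqrt ((2 * pi)^CARD('d) / det A))"
proof -
  define G where "G A \<longleftrightarrow> 0 < det A \<and>
    (\<integral>\<^sup>+x. ennreal (exp (- wnorm2 A x / 2)) \<partial>lborel) = ennreal (sqrt ((2 * pi)^CARD('d) / det A))"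
    for A :: "real^'d^'d"
  have "\<forall>A. pos_def A \<longrightarrow> (\<forall>j k. j \<noteq> k \<longrightarrow> j \<notin> K \<or> k \<notin> K \<longrightarrow> A$j$k = 0) \<longrightarrow> G A"
    if "finite K" for K :: "'d set"
    using that
  proof (induction K rule: finite_induct)
    case empty
    show ?case
    proof (intro allI impI)
      fix A :: "real^'d^'d"
      assume A: "pos_def A" and "\<forall>j k. j \<noteq> k \<longrightarrow> j \<notin> {} \<or> k \<notin> {} \<longrightarrow> A$j$k = 0"
      then have diag: "\<And>j k. j \<noteq> k \<Longrightarrow> A$j$k = 0"
        by blast
      show "G A"
        unfolding G_def
        using nn_integral_gaussian_diagonal[OF diag pos_def_diagonal_pos[OF A]]
          pos_def_diagonal_pos[OF A]
        by (simp add: det_diagonal[OF diag] prod_pos)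
    qed
  next
    case (insert i K)
    show ?case
    proof (intro allI impI)
      fix A :: "real^'d^'d"
      assume A: "pos_def A" and diag: "\<forall>j k. j \<noteq> k \<longrightarrow> j \<notin> insert i K \<or> k \<notin> insert i K \<longrightarrow> A$j$k = 0"
      have sym: "transpose A = A" and pivot: "A$i$i \<noteq> 0"
        using A pos_def_diagonal_pos[OF A, of i] unfolding pos_def_def by auto
      have "\<forall>j k. j \<noteq> k \<longrightarrow> j \<notin> K \<or> k \<notin> K \<longrightarrow> schur_complement A i $j$k = 0"
        using diag by (auto simp: schur_complement_def)
      then have "G (schur_complement A i)"
        using insert.IH pos_def_schur_complement[OF A] by blast
      moreover have "(\<integral>\<^sup>+x. ennreal (exp (- wnorm2 A x / 2)) \<partial>lborel)
          = (\<integral>\<^sup>+x. ennreal (exp (- wnorm2 (schur_complement A i) x / 2)) \<partial>lborel)"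
        unfolding wnorm2_schur_complement[OF sym pivot]
        by (rule nn_integral_lborel_shear) (auto simp: inner_axis)
      ultimately show "G A"
        unfolding G_def det_schur_complement[OF sym pivot] by simp
    qed
  qed
  from this[of UNIV] assms have "G A"
    by simp
  then show "0 < det A"
    and "(\<integral>\<^sup>+x. ennreal (exp (- wnorm2 A x / 2)) \<partial>lborel) = ennreal (sqrt ((2 * pi)^CARD('d) / det A))"
    unfolding G_def by auto
qed

section \<open>The multivariate normal distribution\<close>

lemma mvn_density_eq:
  "mvn_density mu S x = exp (- wnorm2 (matrix_inv S) (x - mu) / 2) / sqrt ((2 * pi) ^ CARD('d) * det S)"
  for S :: "real^'d^'d"
  unfolding mvn_density_def wnorm2_def inner_minus_left by simp

lemma borel_measurable_mvn_density [measurable]: "mvn_density mu S \<in> borel_measurable borel"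
  unfolding mvn_density_eq by measurable

lemma mvn_density_nonneg: "pos_def S \<Longrightarrow> 0 \<le> mvn_density mu S x"
  unfolding mvn_density_eq using gaussian_integral_pos_def(1)[of S] by simp

lemma sets_mvn [measurable_cong, simp]: "sets (mvn mu S) = sets borel"
  by (simp add: mvn_def)

lemma nn_integral_mvn_density:
  fixes S :: "real^'d^'d"
  assumes S: "pos_def S"
  shows "(\<integral>\<^sup>+x. ennreal (mvn_density mu S x) \<partial>lborel) = 1"
proof -
  define A where "A = matrix_inv S"
  have A: "pos_def A"
    unfolding A_def using pos_def_matrix_inv(3)[OF S] .
  have "det S * det A = 1"
    unfolding A_def det_mul[symmetric] pos_def_matrix_inv(1)[OF S] by simp
  then have "det S = 1 / det A"
    using gaussian_integral_pos_def(1)[OF A] by (simp add: eq_divide_eq)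
  then have C: "sqrt ((2 * pi) ^ CARD('d) * det S) = sqrt ((2 * pi) ^ CARD('d) / det A)"
    by simp
  define C where "C = sqrt ((2 * pi) ^ CARD('d) / det A)"
  have "0 < C"
    unfolding C_def using gaussian_integral_pos_def(1)[OF A] by simp
  have "(\<integral>\<^sup>+x. ennreal (mvn_density mu S x) \<partial>lborel)
      = (\<integral>\<^sup>+x. ennreal (exp (- wnorm2 A (x - mu) / 2)) * ennreal (1 / C) \<partial>lborel)"
    unfolding mvn_density_eq C A_def[symmetric] C_def[symmetric]
    using \<open>0 < C\<close> by (intro nn_integral_cong) (simp add: ennreal_mult'' [symmetric])
  also have "\<dots> = (\<integral>\<^sup>+x. ennreal (exp (- wnorm2 A (x - mu) / 2)) \<partial>lborel) * ennreal (1 / C)"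
    by (rule nn_integral_multc) measurable
  also have "(\<integral>\<^sup>+x. ennreal (exp (- wnorm2 A (x - mu) / 2)) \<partial>lborel) = ennreal C"
    using nn_integral_lborel_translate[of "\<lambda>x. ennreal (exp (- wnorm2 A x / 2))" mu]
    unfolding C_def gaussian_integral_pos_def(2)[OF A] by simp
  also have "ennreal C * ennreal (1 / C) = 1"
    using \<open>0 < C\<close> by (simp flip: ennreal_mult'')
  finally show ?thesis .
qed

lemma prob_space_mvn: "pos_def S \<Longrightarrow> prob_space (mvn mu S)"
  unfolding mvn_def by (rule prob_spaceI) (simp add: emeasure_density nn_integral_mvn_density)

lemma mvn_density_mult_exp_inner:
  fixes S :: "real^'d^'d"
  assumes S: "pos_def S"
  shows "mvn_density mu S x * exp (u \<bullet> (x - mu)) = exp (wnorm2 S u / 2) * mvn_density (mu + S *v u) S x"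
proof -
  define A where "A = matrix_inv S"
  have A: "pos_def A"
    unfolding A_def using pos_def_matrix_inv(3)[OF S] .
  define w where "w = x - mu"
  have AS: "A *v (S *v u) = u"
    by (simp add: A_def matrix_vector_mul_assoc pos_def_matrix_inv(2)[OF S])
  have wSu: "w \<bullet> (A *v (S *v u)) = u \<bullet> w"
    by (simp add: AS inner_commute)
  have "transpose A = A"
    using A by (simp add: pos_def_def)
  then have Suw: "(S *v u) \<bullet> (A *v w) = u \<bullet> w"
    using inner_transpose_matrix_vector[of "S *v u" A w] by (simp only: AS inner_commute)
  have Su: "(S *v u) \<bullet> (A *v (S *v u)) = u \<bullet> (S *v u)"
    unfolding AS by (rule inner_commute)
  have "wnorm2 A (w - S *v u) = wnorm2 A w - 2 * (u \<bullet> w) + wnorm2 S u"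
    unfolding wnorm2_def
    by (simp add: matrix_vector_mult_diff_distrib inner_diff_left inner_diff_right wSu Suw Su)
  moreover have "x - (mu + S *v u) = w - S *v u"
    by (simp add: w_def)
  ultimately show ?thesis
    unfolding mvn_density_eq A_def[symmetric] w_def[symmetric]
    by (simp add: exp_add[symmetric] exp_diff field_simps)
qed

lemma nn_integral_mvn_exp_inner:
  fixes S :: "real^'d^'d"
  assumes S: "pos_def S"
  shows "(\<integral>\<^sup>+x. ennreal (exp (u \<bullet> (x - mu))) \<partial>mvn mu S) = ennreal (exp (wnorm2 S u / 2))"
proof -
  have "(\<integral>\<^sup>+x. ennreal (exp (u \<bullet> (x - mu))) \<partial>mvn mu S)
      = (\<integral>\<^sup>+x. ennreal (mvn_density mu S x * exp (u \<bullet> (x - mu))) \<partial>lborel)"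
    unfolding mvn_def using mvn_density_nonneg[OF S]
    by (subst nn_integral_density) (auto simp: ennreal_mult)
  also have "\<dots> = (\<integral>\<^sup>+x. ennreal (exp (wnorm2 S u / 2)) * ennreal (mvn_density (mu + S *v u) S x) \<partial>lborel)"
    unfolding mvn_density_mult_exp_inner[OF S] using mvn_density_nonneg[OF S]
    by (simp add: ennreal_mult)
  also have "\<dots> = ennreal (exp (wnorm2 S u / 2))"
    by (simp add: nn_integral_cmult nn_integral_mvn_density[OF S])
  finally show ?thesis .
qed

lemma nn_integral_PiM_mvn_exp_sum:
  fixes S :: "real^'d^'d" and w :: "'i \<Rightarrow> real^'d"
  assumes S: "pos_def S" and I: "finite I"
  shows "(\<integral>\<^sup>+bt. ennreal (exp (\<Sum>k\<in>I. w k \<bullet> (bt k - mu))) \<partial>PiM I (\<lambda>_. mvn mu S))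
       = ennreal (exp ((\<Sum>k\<in>I. wnorm2 S (w k)) / 2))"
proof -
  interpret prob_space "mvn mu S"
    using prob_space_mvn[OF S] .
  interpret product_sigma_finite "\<lambda>_::'i. mvn mu S"
    by standard
  have "(\<integral>\<^sup>+bt. ennreal (exp (\<Sum>k\<in>I. w k \<bullet> (bt k - mu))) \<partial>PiM I (\<lambda>_. mvn mu S))
      = (\<integral>\<^sup>+bt. (\<Prod>k\<in>I. ennreal (exp (w k \<bullet> (bt k - mu)))) \<partial>PiM I (\<lambda>_. mvn mu S))"
    using I by (simp add: exp_sum prod_ennreal)
  also have "\<dots> = (\<Prod>k\<in>I. \<integral>\<^sup>+y. ennreal (exp (w k \<bullet> (y - mu))) \<partial>mvn mu S)"
    by (rule product_nn_integral_prod[OF I]) measurable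
  also have "\<dots> = ennreal (exp ((\<Sum>k\<in>I. wnorm2 S (w k)) / 2))"
    using I by (simp add: nn_integral_mvn_exp_inner[OF S] prod_ennreal exp_sum sum_divide_distrib)
  finally show ?thesis .
qed

lemma sum_two_support:
  assumes "finite I" "a \<in> I" "j \<in> I" "a \<noteq> j" "\<And>k. k \<in> I \<Longrightarrow> k \<noteq> a \<Longrightarrow> k \<noteq> j \<Longrightarrow> f k = 0"
  shows "(\<Sum>k\<in>I. f k) = f a + f j"
proof -
  have "(\<Sum>k\<in>I. f k) = (\<Sum>k\<in>{a, j}. f k)"
    by (rule sum.mono_neutral_right) (use assms in auto)
  then show ?thesis
    using assms(4) by simp
qed

text \<open>Chernoff bound, with the exponent optimized at l = s / T.\<close>

lemma mvn_comparison_tail: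
  fixes S :: "real^'d^'d" and xa xj mu :: "real^'d"
  assumes S: "pos_def S" and I: "finite I" "a \<in> I" "j \<in> I" "a \<noteq> j"
    and s: "0 < s" and gap: "(xj - xa) \<bullet> mu \<le> - s"
    and T: "0 < wnorm2 S xa + wnorm2 S xj"
  defines "M \<equiv> PiM I (\<lambda>_. mvn mu S)"
  shows "emeasure M {bt \<in> space M. xa \<bullet> bt a \<le> xj \<bullet> bt j}
           \<le> ennreal (exp (- s\<^sup>2 / (2 * (wnorm2 S xa + wnorm2 S xj))))"
proof -
  define T where "T = wnorm2 S xa + wnorm2 S xj"
  define l where "l = s / T"
  have "0 < T" "0 < l"
    using T s by (simp_all add: T_def l_def)
  define Z where "Z bt = xj \<bullet> (bt j - mu) - xa \<bullet> (bt a - mu)" for bt :: "'a \<Rightarrow> real^'d"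
  define w where "w k = (if k = j then l *\<^sub>R xj else if k = a then - (l *\<^sub>R xa) else 0)" for k
  have Z_sum: "(\<Sum>k\<in>I. w k \<bullet> (bt k - mu)) = l * Z bt" for bt
    using I by (subst sum_two_support[of I a j]) (auto simp: w_def Z_def algebra_simps)
  have w_sum: "(\<Sum>k\<in>I. wnorm2 S (w k)) = l\<^sup>2 * T"
    using I by (subst sum_two_support[of I a j]) (auto simp: w_def T_def wnorm2_scaleR algebra_simps)
  have [measurable]: "Z \<in> borel_measurable M"
    unfolding Z_def M_def using I by measurable
  have "{bt \<in> space M. xa \<bullet> bt a \<le> xj \<bullet> bt j} \<subseteq> {bt \<in> space M. s \<le> Z bt}"
    using gap by (auto simp: Z_def inner_diff_left inner_diff_right)
  then have "emeasure M {bt \<in> space M. xa \<bullet> bt a \<le> xj \<bullet> bt j} \<le> emeasure M {bt \<in> space M. s \<le> Z bt}"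
    by (rule emeasure_mono) measurable
  also have "\<dots> \<le> ennreal (exp (- l * s)) * (\<integral>\<^sup>+bt. ennreal (exp (l * Z bt)) * indicator (space M) bt \<partial>M)"
    by (rule Chernoff_ineq_nn_integral_ge[OF \<open>0 < l\<close>]) measurable
  also have "(\<integral>\<^sup>+bt. ennreal (exp (l * Z bt)) * indicator (space M) bt \<partial>M)
      = (\<integral>\<^sup>+bt. ennreal (exp (\<Sum>k\<in>I. w k \<bullet> (bt k - mu))) \<partial>M)"
    by (intro nn_integral_cong) (simp add: Z_sum)
  also have "\<dots> = ennreal (exp (l\<^sup>2 * T / 2))"
    unfolding M_def nn_integral_PiM_mvn_exp_sum[OF S I(1)] w_sum ..
  also have "ennreal (exp (- l * s)) * ennreal (exp (l\<^sup>2 * T / 2)) = ennreal (exp (- s\<^sup>2 / (2 * T)))"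
    using \<open>0 < T\<close> by (simp add: l_def power2_eq_square field_simps flip: ennreal_mult exp_add)
  finally show ?thesis
    unfolding T_def .
qed

section \<open>Thompson sampling picks a super-unsaturated arm\<close>

lemma argmax_arm:
  assumes "0 < N"
  shows "argmax_arm N f < N" and "j < N \<Longrightarrow> f j \<le> f (argmax_arm N f)"
proof -
  define m where "m = Max (f ` {..<N})"
  have "m \<in> f ` {..<N}"
    unfolding m_def using assms by (intro Max_in) auto
  then obtain i where "i < N" "f i = m"
    by auto
  moreover have "f j \<le> m" if "j < N" for j
    unfolding m_def using that by simp
  ultimately have "\<exists>i. i < N \<and> (\<forall>j<N. f j \<le> f i)"
    by auto
  then have "argmax_arm N f < N \<and> (\<forall>j<N. f j \<le> f (argmax_arm N f))"
    unfolding argmax_arm_def by (rule LeastI_ex)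
  then show "argmax_arm N f < N" and "j < N \<Longrightarrow> f j \<le> f (argmax_arm N f)"
    by auto
qed

lemma measurable_argmax_arm:
  assumes Y: "\<And>i. i < N \<Longrightarrow> Y i \<in> borel_measurable M"
  shows "(\<lambda>\<omega>. argmax_arm N (\<lambda>i. Y i \<omega>)) \<in> measurable M (count_space UNIV)"
  unfolding argmax_arm_def
proof (rule measurable_Least)
  fix i
  show "Measurable.pred M (\<lambda>\<omega>. i < N \<and> (\<forall>j<N. Y j \<omega> \<le> Y i \<omega>))"
  proof (cases "i < N")
    case True
    have "Measurable.pred M (\<lambda>\<omega>. \<forall>j\<in>{..<N}. Y j \<omega> \<le> Y i \<omega>)"
    proof (rule pred_intros_countable_bounded(3))
      fix j assume "j \<in> {..<N}"
      with Y True show "Measurable.pred M (\<lambda>\<omega>. Y j \<omega> \<le> Y i \<omega>)"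
        unfolding pred_def by (intro borel_measurable_le) auto
    qed
    moreover have "(\<lambda>\<omega>. i < N \<and> (\<forall>j<N. Y j \<omega> \<le> Y i \<omega>)) = (\<lambda>\<omega>. \<forall>j\<in>{..<N}. Y j \<omega> \<le> Y i \<omega>)"
      using True by auto
    ultimately show ?thesis
      by (simp only:)
  next
    case False
    then have "(\<lambda>\<omega>. i < N \<and> (\<forall>j<N. Y j \<omega> \<le> Y i \<omega>)) = (\<lambda>_. False)"
      by simp
    then show ?thesis
      by (simp only:) (rule measurable_const, simp)
  qed
qed

text \<open>Union bound: an arm chosen outside K has beaten the arm a \<in> K.\<close>

lemma (in prob_space) prob_argmax_arm_notin_le:
  assumes Y: "\<And>i. i < N \<Longrightarrow> Y i \<in> borel_measurable M" and a: "a < N" "a \<in> K" and "0 \<le> p"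
    and beats_a: "\<And>j. j < N \<Longrightarrow> j \<notin> K \<Longrightarrow> prob {\<omega> \<in> space M. Y a \<omega> \<le> Y j \<omega>} \<le> p"
  shows "prob {\<omega> \<in> space M. argmax_arm N (\<lambda>i. Y i \<omega>) \<notin> K} \<le> (real N - 1) * p"
proof -
  define J where "J = {..<N} - K"
  define E where "E j = {\<omega> \<in> space M. Y a \<omega> \<le> Y j \<omega>}" for j
  have E: "E ` J \<subseteq> events"
    using Y a by (auto simp: E_def J_def)
  have "{\<omega> \<in> space M. argmax_arm N (\<lambda>i. Y i \<omega>) \<notin> K} \<subseteq> (\<Union>j\<in>J. E j)"
  proof
    fix \<omega> assume \<omega>: "\<omega> \<in> {\<omega> \<in> space M. argmax_arm N (\<lambda>i. Y i \<omega>) \<notin> K}"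
    have "0 < N"
      using a by simp
    then have "argmax_arm N (\<lambda>i. Y i \<omega>) \<in> J" "\<omega> \<in> E (argmax_arm N (\<lambda>i. Y i \<omega>))"
      using \<omega> argmax_arm[where f = "\<lambda>i. Y i \<omega>"] a by (auto simp: J_def E_def)
    then show "\<omega> \<in> (\<Union>j\<in>J. E j)"
      by blast
  qed
  then have "prob {\<omega> \<in> space M. argmax_arm N (\<lambda>i. Y i \<omega>) \<notin> K} \<le> prob (\<Union>j\<in>J. E j)"
    using E by (intro finite_measure_mono) (auto simp: J_def)
  also have "\<dots> \<le> (\<Sum>j\<in>J. prob (E j))"
    using E by (intro finite_measure_subadditive_finite) (auto simp: J_def)
  also have "\<dots> \<le> real (card J) * p"
    using sum_mono[of J "\<lambda>j. prob (E j)" "\<lambda>_. p"] beats_a by (simp add: J_def E_def)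
  also have "\<dots> \<le> (real N - 1) * p"
  proof -
    have "card J \<le> card ({..<N} - {a})"
      using a by (intro card_mono) (auto simp: J_def)
    then show ?thesis
      using a \<open>0 \<le> p\<close> by (intro mult_right_mono) (auto simp: of_nat_diff)
  qed
  finally show ?thesis .
qed

lemma (in prob_space) prob_argmax_arm_in_ge:
  assumes Y: "\<And>i. i < N \<Longrightarrow> Y i \<in> borel_measurable M" and a: "a < N" "a \<in> K" and "0 \<le> p"
    and beats_a: "\<And>j. j < N \<Longrightarrow> j \<notin> K \<Longrightarrow> prob {\<omega> \<in> space M. Y a \<omega> \<le> Y j \<omega>} \<le> p"
  shows "1 - (real N - 1) * p \<le> prob {\<omega> \<in> space M. argmax_arm N (\<lambda>i. Y i \<omega>) \<in> K}"
proof -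
  define E where "E = {\<omega> \<in> space M. argmax_arm N (\<lambda>i. Y i \<omega>) \<in> K}"
  have "E = (\<lambda>\<omega>. argmax_arm N (\<lambda>i. Y i \<omega>)) -` K \<inter> space M"
    by (auto simp: E_def)
  then have "E \<in> events"
    using measurable_sets[OF measurable_argmax_arm[OF Y]] by simp
  moreover have "space M - E = {\<omega> \<in> space M. argmax_arm N (\<lambda>i. Y i \<omega>) \<notin> K}"
    by (auto simp: E_def)
  ultimately show ?thesis
    using prob_argmax_arm_notin_le[of N Y a K p] assms prob_compl[of E] by (simp add: E_def)
qed

lemma gamma_range_bounds:
  fixes gamma :: real
  assumes "1 / real (N + 1) \<le> gamma" "gamma < 1 / real N"
  defines "p \<equiv> (1 - gamma * real N) / real N"
  shows "0 < N" "0 < p" "p < 1" "(real N - 1) * p \<le> gamma"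
proof -
  show "0 < N"
    using assms(1,2) by (cases N) auto
  then have N: "1 \<le> real N"
    by simp
  have "0 < gamma"
    using assms(1) by (rule order.strict_trans2[rotated]) simp
  have "gamma * N < 1" "1 \<le> gamma * (N + 1)"
    using assms(1,2) \<open>0 < N\<close> by (simp_all add: field_simps)
  have "0 < gamma * N"
    using \<open>0 < gamma\<close> \<open>0 < N\<close> by simp
  then show "0 < p" "p < 1"
    using N \<open>gamma * N < 1\<close> by (simp_all add: p_def field_simps)
  have "(real N - 1) * 1 \<le> (real N - 1) * (gamma * (N + 1))"
    using N \<open>1 \<le> gamma * (N + 1)\<close> by (intro mult_left_mono) auto
  then have "(real N - 1) * (1 - gamma * N) \<le> gamma * N"
    using \<open>0 < gamma\<close> by (simp add: algebra_simps)
  then show "(real N - 1) * p \<le> gamma"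
    using N by (simp add: p_def field_simps)
qed

lemma exp_neg_inverse_two_square_eq:
  fixes p :: real
  assumes "0 < p" "p < 1"
  defines "v \<equiv> 1 / sqrt (2 * ln (1 / p))"
  shows "0 < v" "exp (- 1 / (2 * v\<^sup>2)) = p"
proof -
  have "0 < ln (1 / p)"
    using assms by simp
  then show "0 < v" "exp (- 1 / (2 * v\<^sup>2)) = p"
    using assms by (simp_all add: v_def power_divide ln_div exp_minus)
qed

text \<open>By Cauchy-Schwarz, betahat prefers a to j by more than s; the difference of the two
  samples has variance v^2 s^2, so the Chernoff bound gives exp (- s^2 / (2 v^2 s^2)).\<close>

lemma mvn_prob_prefers_far_arm_le:
  fixes Vi :: "real^'d^'d" and xa xj beta betahat :: "real^'d"
  assumes Vi: "pos_def Vi" and v: "0 < v" and I: "finite I" "a \<in> I" "j \<in> I" "a \<noteq> j"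
    and norms: "norm xa \<le> 1" "norm xj \<le> 1"
    and far: "2 * norm (betahat - beta) + sqrt (wnorm2 Vi xa + wnorm2 Vi xj) < xa \<bullet> beta - xj \<bullet> beta"
  defines "M \<equiv> PiM I (\<lambda>_. mvn betahat (v\<^sup>2 *\<^sub>R Vi))"
  shows "measure M {bt \<in> space M. xa \<bullet> bt a \<le> xj \<bullet> bt j} \<le> exp (- 1 / (2 * v\<^sup>2))"
proof -
  define s where "s = sqrt (wnorm2 Vi xa + wnorm2 Vi xj)"
  have nonneg: "0 \<le> wnorm2 Vi xa" "0 \<le> wnorm2 Vi xj"
    using pos_def_wnorm2_nonneg[OF Vi] by auto
  have "(xj - xa) \<bullet> (betahat - beta) \<le> norm (xj - xa) * norm (betahat - beta)"
    by (rule norm_cauchy_schwarz)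
  also have "\<dots> \<le> 2 * norm (betahat - beta)"
    using norm_triangle_ineq4[of xj xa] norms by (intro mult_right_mono) auto
  finally have gap: "(xj - xa) \<bullet> betahat \<le> - s"
    using far by (simp add: s_def inner_diff_left inner_diff_right)
  have "0 < s"
  proof (rule ccontr)
    assume "\<not> 0 < s"
    then have "wnorm2 Vi xa = 0" "wnorm2 Vi xj = 0"
      using nonneg by (auto simp: s_def)
    then show False
      using far pos_def_wnorm2_eq_0_iff[OF Vi] by simp
  qed
  have S: "pos_def (v\<^sup>2 *\<^sub>R Vi)"
    using Vi v by (simp add: pos_def_scaleR)
  have T: "wnorm2 (v\<^sup>2 *\<^sub>R Vi) xa + wnorm2 (v\<^sup>2 *\<^sub>R Vi) xj = v\<^sup>2 * s\<^sup>2"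
    using nonneg by (simp add: s_def wnorm2_scaleR_matrix algebra_simps)
  interpret prob_space M
    unfolding M_def using S by (intro prob_space_PiM prob_space_mvn)
  have "emeasure M {bt \<in> space M. xa \<bullet> bt a \<le> xj \<bullet> bt j} \<le> ennreal (exp (- s\<^sup>2 / (2 * (v\<^sup>2 * s\<^sup>2))))"
    unfolding M_def T[symmetric]
    using \<open>0 < s\<close> v by (intro mvn_comparison_tail[OF S I \<open>0 < s\<close> gap]) (simp_all add: T)
  also have "- s\<^sup>2 / (2 * (v\<^sup>2 * s\<^sup>2)) = - 1 / (2 * v\<^sup>2)"
    using \<open>0 < s\<close> by (simp add: field_simps)
  finally show ?thesis
    by (simp add: emeasure_eq_measure)
qed

theorem lemma1:
  fixes N :: nat and t :: nat and lam :: real and gamma :: real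
    and X :: "nat \<Rightarrow> nat \<Rightarrow> real ^ 'd"  \<comment> \<open>X tau i = context of arm i at round tau\<close>
    and beta betahat :: "real ^ 'd"
  assumes t: "t \<ge> 1"
    and lam: "lam > 0"
    and ctx_bdd: "\<And>i. i < N \<Longrightarrow> norm (X t i) \<le> 1"
    and gamma: "1 / real (N + 1) \<le> gamma" "gamma < 1 / real N"
  defines "V \<equiv> (\<Sum>tau\<in>{1..<t}. \<Sum>i<N. outer (X tau i)) + lam *\<^sub>R mat 1"
    and "v \<equiv> 1 / sqrt (2 * ln (real N / (1 - gamma * real N)))"
  defines "astar \<equiv> argmax_arm N (\<lambda>i. X t i \<bullet> beta)"
  defines "Delta \<equiv> (\<lambda>i. X t astar \<bullet> beta - X t i \<bullet> beta)"
  defines "Nt \<equiv> {i. i < N \<and> Delta i \<le> 2 * norm (betahat - beta)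
                 + sqrt (wnorm2 (matrix_inv V) (X t astar) + wnorm2 (matrix_inv V) (X t i))}"
  defines "M \<equiv> PiM {..<N} (\<lambda>_. mvn betahat ((v\<^sup>2) *\<^sub>R matrix_inv V))"
  shows "measure M {bt \<in> space M. argmax_arm N (\<lambda>i. X t i \<bullet> bt i) \<in> Nt} \<ge> 1 - gamma"
proof -
  define p where "p = (1 - gamma * real N) / real N"
  note p = gamma_range_bounds[OF gamma, folded p_def]
  have "v = 1 / sqrt (2 * ln (1 / p))"
    by (simp add: v_def p_def)
  with exp_neg_inverse_two_square_eq[OF p(2,3)] have v: "0 < v" "exp (- 1 / (2 * v\<^sup>2)) = p"
    by simp_all
  have Vi: "pos_def (matrix_inv V)"
    unfolding V_def using pos_def_matrix_inv(3)[OF pos_def_sum_outer_plus_ridge[OF lam]] .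
  interpret prob_space M
    unfolding M_def using Vi v by (intro prob_space_PiM prob_space_mvn pos_def_scaleR) simp_all
  have astar: "astar < N" "\<And>j. j < N \<Longrightarrow> X t j \<bullet> beta \<le> X t astar \<bullet> beta"
    unfolding astar_def using argmax_arm[OF p(1)] by auto
  then have "astar \<in> Nt"
    using pos_def_wnorm2_nonneg[OF Vi] by (simp add: Nt_def Delta_def)
  have "1 - (real N - 1) * p \<le> prob {bt \<in> space M. argmax_arm N (\<lambda>i. X t i \<bullet> bt i) \<in> Nt}"
  proof (rule prob_argmax_arm_in_ge[OF _ astar(1) \<open>astar \<in> Nt\<close>])
    show "(\<lambda>bt. X t i \<bullet> bt i) \<in> borel_measurable M" if "i < N" for i
      unfolding M_def by measurable (use that in simp)
    fix j assume "j < N" "j \<notin> Nt"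
    then show "prob {bt \<in> space M. X t astar \<bullet> bt astar \<le> X t j \<bullet> bt j} \<le> p"
      unfolding M_def v(2)[symmetric] using \<open>astar \<in> Nt\<close> astar(1) ctx_bdd
      by (intro mvn_prob_prefers_far_arm_le[OF Vi v(1), where beta = beta]) (auto simp: Nt_def Delta_def)
  qed (use p in auto)
  then show ?thesis
    using p(4) by simp
qed

end
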